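(* Let $G=(V,E)$ be a graph with no $K_4$ minor and let $C\subseteq V$ be central. Then every simple cycle of $G$ contains at most two edges of $\delta_G(C)$.
   Context: $\delta_G(C)$ is the set of edges of $G$ with exactly one endpoint in $C$. A set $C\subseteq V$ (and the cut $\delta_G(C)$) is central if both $C$ and $V\setminus C$ induce connected subgraphs of $G$. *)

theory Defs
  imports Main
begin

definition simple_graph :: "'a set \<Rightarrow> ('a \<Rightarrow> 'a \<Rightarrow> bool) \<Rightarrow> bool" where
  "simple_graph V E \<longleftrightarrow> finite V \<and> (\<forall>u v. E u v \<longrightarrow> E v u)
     \<and> (\<forall>v. \<not> E v v) \<and> (\<forall>u v. E u v \<longrightarrow> u \<in> V \<and> v \<in> V)"

definition induces_connected :: "('a \<Rightarrow> 'a \<Rightarrow> bool) \<Rightarrow> 'a set \<Rightarrow> bool" where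
  "induces_connected E S \<longleftrightarrow> (\<forall>x\<in>S. \<forall>y\<in>S. \<exists>p. p \<noteq> [] \<and> hd p = x \<and> last p = y
      \<and> set p \<subseteq> S \<and> (\<forall>i. Suc i < length p \<longrightarrow> E (p ! i) (p ! Suc i)))"

definition central :: "'a set \<Rightarrow> ('a \<Rightarrow> 'a \<Rightarrow> bool) \<Rightarrow> 'a set \<Rightarrow> bool" where
  "central V E C \<longleftrightarrow> C \<subseteq> V \<and> induces_connected E C \<and> induces_connected E (V - C)"

definition cut_edges :: "'a set \<Rightarrow> ('a \<Rightarrow> 'a \<Rightarrow> bool) \<Rightarrow> 'a set \<Rightarrow> 'a set set" where
  "cut_edges V E C = {{u, v} | u v. E u v \<and> u \<in> C \<and> v \<in> V - C}"

definition has_K4_minor :: "'a set \<Rightarrow> ('a \<Rightarrow> 'a \<Rightarrow> bool) \<Rightarrow> bool" where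
  "has_K4_minor V E \<longleftrightarrow> (\<exists>B :: nat \<Rightarrow> 'a set.
      (\<forall>i<4. B i \<noteq> {} \<and> B i \<subseteq> V \<and> induces_connected E (B i)) \<and>
      (\<forall>i<4. \<forall>j<4. i \<noteq> j \<longrightarrow> B i \<inter> B j = {} \<and> (\<exists>u\<in>B i. \<exists>v\<in>B j. E u v)))"

definition simple_cycle :: "('a \<Rightarrow> 'a \<Rightarrow> bool) \<Rightarrow> 'a list \<Rightarrow> bool" where
  "simple_cycle E cs \<longleftrightarrow> length cs \<ge> 3 \<and> distinct cs \<and>
     (\<forall>i < length cs. E (cs ! i) (cs ! ((i + 1) mod length cs)))"

definition cycle_edges :: "'a list \<Rightarrow> 'a set set" where
  "cycle_edges cs = {{cs ! i, cs ! ((i + 1) mod length cs)} | i. i < length cs}"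

end

theory Submission
  imports Defs
begin

text \<open>
  Rotate the cycle into the form A @ R, where A is a maximal arc inside
  C and R starts and ends outside C.  If R stays outside C, the only cut edges of
  the cycle are the two edges joining A and R.  If R re-enters C, a K4 minor is
  built: grow A inside C (avoiding the other cycle vertices) until it touches a
  cycle vertex y in C on R; split R at y into R1, y, R2 and grow R1 inside V - C
  until it touches R2.  The two grown sets together with {y} and R2 are pairwise
  adjacent branch sets.
\<close>

lemma simple_graph_symp: "simple_graph V E \<Longrightarrow> symp E"
  by (simp add: simple_graph_def symp_def)

lemma induces_connected_iff:
  "induces_connected E S \<longleftrightarrow> (\<forall>x\<in>S. \<forall>y\<in>S. \<exists>p. p \<noteq> [] \<and> hd p = x \<and> last p = y
      \<and> set p \<subseteq> S \<and> successively E p)"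
  by (simp add: induces_connected_def successively_conv_nth)

definition reach :: "('a \<Rightarrow> 'a \<Rightarrow> bool) \<Rightarrow> 'a set \<Rightarrow> 'a \<Rightarrow> 'a set" where
  "reach E D a = {z. \<exists>p. p \<noteq> [] \<and> hd p = a \<and> last p = z \<and> set p \<subseteq> D \<and> successively E p}"

lemma reach_subset: "reach E D a \<subseteq> D"
  unfolding reach_def by auto

lemma reach_step:
  assumes "z \<in> reach E D a" "w \<in> D" "E z w"
  shows "w \<in> reach E D a"
proof -
  obtain p where p: "p \<noteq> []" "hd p = a" "last p = z" "set p \<subseteq> D" "successively E p"
    using assms(1) unfolding reach_def by auto
  then have "successively E (p @ [w])"
    using assms(3) by (simp add: successively_append_iff)
  then show ?thesis
    unfolding reach_def using p assms(2) by (intro CollectI exI[of _ "p @ [w]"]) auto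
qed

lemma walk_in_reach:
  assumes "successively E p" "p \<noteq> []" "set p \<subseteq> D"
  shows "set p \<subseteq> reach E D (hd p)"
proof
  fix z assume "z \<in> set p"
  then obtain i where i: "i < length p" "z = p ! i" by (auto simp: in_set_conv_nth)
  let ?q = "take (Suc i) p"
  have "successively E ?q"
    using assms(1) by (metis append_take_drop_id successively_append_iff)
  moreover have "?q \<noteq> []" "hd ?q = hd p" "last ?q = z" "set ?q \<subseteq> D"
    using i assms(2,3) set_take_subset[of "Suc i" p] by (auto simp: last_conv_nth)
  ultimately show "z \<in> reach E D (hd p)"
    unfolding reach_def by blast
qed

lemma walk_join:
  assumes "successively E p" "successively E q" "p \<noteq> []" "q \<noteq> []" "last p = hd q"
  shows "successively E (p @ tl q)"
  using assms by (cases q) (auto simp: successively_append_iff successively_Cons)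

lemma walk_rev:
  assumes "symp E" "successively E p"
  shows "successively E (rev p)"
proof -
  have "successively (\<lambda>x y. E y x) p"
    using assms(2) by (rule successively_mono) (use assms(1) in \<open>simp add: symp_def\<close>)
  then show ?thesis by simp
qed

lemma reach_connected:
  assumes "symp E"
  shows "induces_connected E (reach E D a)"
  unfolding induces_connected_iff
proof (intro ballI)
  fix x y assume "x \<in> reach E D a" "y \<in> reach E D a"
  then obtain p q where
    p: "p \<noteq> []" "hd p = a" "last p = x" "set p \<subseteq> D" "successively E p" and
    q: "q \<noteq> []" "hd q = a" "last q = y" "set q \<subseteq> D" "successively E q"
    unfolding reach_def by blast
  have "successively E (rev p)"
    using walk_rev[OF assms p(5)] .
  then have walk: "successively E (rev p @ tl q)"
    using walk_join[of E "rev p" q] p q by (simp add: last_rev)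
  have "set p \<subseteq> reach E D a" "set q \<subseteq> reach E D a"
    using walk_in_reach[OF p(5,1,4)] walk_in_reach[OF q(5,1,4)] p(2) q(2) by simp_all
  moreover have "set (tl q) \<subseteq> set q"
    by (cases q) auto
  moreover have "last (rev p @ tl q) = y"
    using p q by (cases q) (auto simp: last_rev)
  ultimately show "\<exists>r. r \<noteq> [] \<and> hd r = x \<and> last r = y \<and> set r \<subseteq> reach E D a \<and> successively E r"
    using walk p q by (intro exI[of _ "rev p @ tl q"]) (auto simp: hd_rev)
qed

lemma walk_set_connected:
  assumes "symp E" "successively E p"
  shows "induces_connected E (set p)"
proof (cases "p = []")
  case True
  then show ?thesis by (simp add: induces_connected_def)
next
  case False
  have "set p = reach E (set p) (hd p)"
    using walk_in_reach[OF assms(2) False order_refl] reach_subset by (rule equalityI)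
  then show ?thesis
    using reach_connected[OF assms(1)] by metis
qed

lemma walk_leaves_set:
  "successively E p \<Longrightarrow> p \<noteq> [] \<Longrightarrow> hd p \<in> R \<Longrightarrow> last p \<notin> R \<Longrightarrow>
    \<exists>u\<in>set p. \<exists>v\<in>set p. u \<in> R \<and> v \<notin> R \<and> E u v"
proof (induction E p rule: successively.induct)
  case (3 E x y zs)
  then show ?case by (cases "y \<in> R") auto
qed auto

lemma connected_leaves_reach:
  assumes "induces_connected E W" "a \<in> W" "a \<in> D" "b \<in> W" "b \<notin> reach E D a"
  shows "\<exists>u\<in>reach E D a. \<exists>v\<in>W. v \<notin> D \<and> E u v"
proof -
  obtain p where p: "p \<noteq> []" "hd p = a" "last p = b" "set p \<subseteq> W" "successively E p"
    using assms(1,2,4) unfolding induces_connected_iff by blast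
  have "a \<in> reach E D a"
    using assms(3) unfolding reach_def by (intro CollectI exI[of _ "[a]"]) auto
  then obtain u v where uv: "u \<in> reach E D a" "v \<notin> reach E D a" "v \<in> W" "E u v"
    using walk_leaves_set[OF p(5,1), of "reach E D a"] p(2-4) assms(5) by auto
  then have "v \<notin> D"
    using reach_step[of u E D a v] by auto
  then show ?thesis
    using uv by blast
qed

(* Grow the walk P
   inside W, avoiding the vertices of S not on P.  The grown set X is connected
   and, since W is connected and contains x in S - P, X is adjacent to some vertex
   of (W \<inter> S) - P. *)
lemma attachment_exists:
  assumes "symp E" "induces_connected E W"
    and "successively E P" "P \<noteq> []" "hd P \<in> W"
    and "x \<in> W" "x \<in> S" "x \<notin> set P"
  defines "X \<equiv> reach E (set P \<union> (W - S)) (hd P)"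
  shows "set P \<subseteq> X" "X \<subseteq> set P \<union> (W - S)" "induces_connected E X"
    and "\<exists>u\<in>X. \<exists>y\<in>W \<inter> S. y \<notin> set P \<and> E u y"
proof -
  show "set P \<subseteq> X"
    unfolding X_def using walk_in_reach[OF assms(3,4)] by blast
  show XD: "X \<subseteq> set P \<union> (W - S)"
    unfolding X_def by (rule reach_subset)
  show "induces_connected E X"
    unfolding X_def by (rule reach_connected[OF assms(1)])
  have "hd P \<in> set P" "x \<notin> X"
    using assms(4,7,8) XD by auto
  then show "\<exists>u\<in>X. \<exists>y\<in>W \<inter> S. y \<notin> set P \<and> E u y"
    using connected_leaves_reach[OF assms(2), of "hd P" "set P \<union> (W - S)" x] assms(5,6)
    unfolding X_def by blast
qed

lemma all_less_4: "(\<forall>i<(4::nat). P i) \<longleftrightarrow> P 0 \<and> P 1 \<and> P 2 \<and> P 3"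
  by (auto simp: less_Suc_eq numeral_eq_Suc)

(* Four nonempty, connected, pairwise disjoint and pairwise adjacent branch sets
   form a K4 minor model (it suffices to check each unordered pair once). *)
lemma K4_minorI:
  assumes "symp E"
    and branch: "\<forall>X\<in>{B0, B1, B2, B3}. X \<noteq> {} \<and> X \<subseteq> V \<and> induces_connected E X"
    and disjoint: "B0 \<inter> B1 = {}" "B0 \<inter> B2 = {}" "B0 \<inter> B3 = {}"
      "B1 \<inter> B2 = {}" "B1 \<inter> B3 = {}" "B2 \<inter> B3 = {}"
    and adjacent: "\<exists>u\<in>B0. \<exists>v\<in>B1. E u v" "\<exists>u\<in>B0. \<exists>v\<in>B2. E u v" "\<exists>u\<in>B0. \<exists>v\<in>B3. E u v"
      "\<exists>u\<in>B1. \<exists>v\<in>B2. E u v" "\<exists>u\<in>B1. \<exists>v\<in>B3. E u v" "\<exists>u\<in>B2. \<exists>v\<in>B3. E u v"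
  shows "has_K4_minor V E"
proof -
  have adjacent_sym: "\<exists>u\<in>Y. \<exists>v\<in>X. E u v" if "\<exists>u\<in>X. \<exists>v\<in>Y. E u v" for X Y
    using that assms(1) by (meson sympD)
  have disjoint_sym: "Y \<inter> X = {}" if "X \<inter> Y = {}" for X Y :: "'a set"
    using that by blast
  define B where "B = (\<lambda>i. [B0, B1, B2, B3] ! i)"
  have "\<forall>i<4. B i \<noteq> {} \<and> B i \<subseteq> V \<and> induces_connected E (B i)"
    using branch by (simp add: all_less_4 B_def)
  moreover have "\<forall>i<4. \<forall>j<4. i \<noteq> j \<longrightarrow> B i \<inter> B j = {} \<and> (\<exists>u\<in>B i. \<exists>v\<in>B j. E u v)"
    by (simp add: all_less_4 B_def disjoint adjacent disjoint_sym[OF disjoint(1)]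
        disjoint_sym[OF disjoint(2)] disjoint_sym[OF disjoint(3)] disjoint_sym[OF disjoint(4)]
        disjoint_sym[OF disjoint(5)] disjoint_sym[OF disjoint(6)]
        adjacent_sym[OF adjacent(1)] adjacent_sym[OF adjacent(2)] adjacent_sym[OF adjacent(3)]
        adjacent_sym[OF adjacent(4)] adjacent_sym[OF adjacent(5)] adjacent_sym[OF adjacent(6)])
  ultimately show ?thesis
    unfolding has_K4_minor_def by blast
qed

lemma simple_cycle_closed_walk:
  assumes "simple_cycle E L"
  shows "successively E L" "E (last L) (hd L)"
proof -
  have n: "length L \<ge> 3" and adj: "\<forall>i < length L. E (L ! i) (L ! ((i + 1) mod length L))"
    using assms by (auto simp: simple_cycle_def)
  show "successively E L"
    unfolding successively_conv_nth using adj by (metis Suc_eq_plus1 Suc_lessD mod_less)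
  have "(length L - 1 + 1) mod length L = 0"
    using n by (simp add: Suc_diff_Suc del: One_nat_def)
  then have "E (L ! (length L - 1)) (L ! 0)"
    using adj[rule_format, of "length L - 1"] n by simp
  moreover have "L \<noteq> []"
    using n by auto
  ultimately show "E (last L) (hd L)"
    by (simp add: last_conv_nth hd_conv_nth)
qed

lemma simple_cycle_subset:
  assumes "simple_graph V E" "simple_cycle E cs"
  shows "set cs \<subseteq> V"
proof
  fix x assume "x \<in> set cs"
  then obtain i where "i < length cs" "x = cs ! i"
    by (auto simp: in_set_conv_nth)
  then show "x \<in> V"
    using assms unfolding simple_cycle_def simple_graph_def by blast
qed

(* Index arithmetic behind the invariance of cycles under rotation. *)
lemma mod_Suc_shift: "(k + Suc i mod n) mod n = Suc ((k + i) mod n) mod (n::nat)"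
  by (simp add: mod_add_right_eq mod_Suc_eq)

lemma rotate_simple_cycle:
  assumes "simple_cycle E cs"
  shows "simple_cycle E (rotate k cs)"
  unfolding simple_cycle_def
proof (intro conjI allI impI)
  show "3 \<le> length (rotate k cs)" "distinct (rotate k cs)"
    using assms by (auto simp: simple_cycle_def)
  fix i assume i: "i < length (rotate k cs)"
  define n where "n = length cs"
  have n: "n > 0" "i < n" "(k + i) mod n < n"
    using i n_def by (auto intro: mod_less_divisor)
  have "E (cs ! ((k + i) mod n)) (cs ! (((k + i) mod n + 1) mod n))"
    using assms n unfolding simple_cycle_def n_def by blast
  then show "E (rotate k cs ! i) (rotate k cs ! ((i + 1) mod length (rotate k cs)))"
    using n by (simp add: nth_rotate n_def[symmetric] mod_Suc_shift)
qed

lemma rotate_cycle_edges_subset: "cycle_edges (rotate k cs) \<subseteq> cycle_edges cs"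
proof
  fix e assume "e \<in> cycle_edges (rotate k cs)"
  then obtain i where i: "i < length cs"
    and e: "e = {rotate k cs ! i, rotate k cs ! ((i + 1) mod length cs)}"
    unfolding cycle_edges_def by auto
  define n where "n = length cs"
  have n: "n > 0" "i < n" "(k + i) mod n < n"
    using i n_def by (auto intro: mod_less_divisor)
  have "e = {cs ! ((k + i) mod n), cs ! (((k + i) mod n + 1) mod n)}"
    using e n by (simp add: nth_rotate n_def[symmetric] mod_Suc_shift)
  then show "e \<in> cycle_edges cs"
    unfolding cycle_edges_def using n n_def by blast
qed

lemma rotate_cycle_edges: "cycle_edges (rotate k cs) = cycle_edges cs"
proof (cases "cs = []")
  case True
  then show ?thesis by simp
next
  case False
  define n where "n = length cs"
  have "(n - k mod n + k) mod n = (n - k mod n + k mod n) mod n"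
    by (simp add: mod_add_right_eq)
  also have "\<dots> = 0"
    using False n_def by simp
  finally have "(n - k mod n + k) mod n = 0" .
  then have "rotate (n - k mod n) (rotate k cs) = cs"
    by (simp add: rotate_rotate n_def)
  then have "cycle_edges cs \<subseteq> cycle_edges (rotate k cs)"
    using rotate_cycle_edges_subset by metis
  then show ?thesis
    using rotate_cycle_edges_subset by blast
qed

lemma cut_edge_endpoints: "{a, b} \<in> cut_edges V E C \<Longrightarrow> (a \<in> C) \<noteq> (b \<in> C)"
  unfolding cut_edges_def by (auto simp: doubleton_eq_iff)

lemma cycle_cut_empty:
  assumes "\<forall>x\<in>set cs. \<forall>y\<in>set cs. (x \<in> C) = (y \<in> C)"
  shows "cycle_edges cs \<inter> cut_edges V E C = {}"
proof (rule ccontr)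
  assume "cycle_edges cs \<inter> cut_edges V E C \<noteq> {}"
  then obtain i where i: "i < length cs"
    and cut: "{cs ! i, cs ! ((i + 1) mod length cs)} \<in> cut_edges V E C"
    unfolding cycle_edges_def by auto
  have "(i + 1) mod length cs < length cs"
    using i by (intro mod_less_divisor) auto
  then show False
    using assms cut_edge_endpoints[OF cut] i by (metis nth_mem)
qed

lemma cycle_cut_two_arcs:
  assumes L: "L = A @ R" and "set A \<subseteq> C" "set R \<inter> C = {}" "A \<noteq> []" "R \<noteq> []"
  shows "cycle_edges L \<inter> cut_edges V E C \<subseteq> {{last A, hd R}, {last R, hd A}}"
proof
  fix e assume e: "e \<in> cycle_edges L \<inter> cut_edges V E C"
  define n where "n = length L"
  obtain i where i: "i < n" and ei: "e = {L ! i, L ! ((i + 1) mod n)}"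
    using e unfolding cycle_edges_def n_def by auto
  have colour: "(L ! k \<in> C) = (k < length A)" if "k < n" for k
  proof (cases "k < length A")
    case True
    then show ?thesis
      using assms(2) L by (auto simp: nth_append)
  next
    case False
    then have "R ! (k - length A) \<in> set R"
      using that L n_def by auto
    then show ?thesis
      using False assms(3) L by (auto simp: nth_append)
  qed
  have "{L ! i, L ! ((i + 1) mod n)} \<in> cut_edges V E C"
    using e ei by simp
  then have differ: "(L ! i \<in> C) \<noteq> (L ! ((i + 1) mod n) \<in> C)"
    by (rule cut_edge_endpoints)
  have "R \<noteq> []" "L \<noteq> []"
    using assms L by auto
  show "e \<in> {{last A, hd R}, {last R, hd A}}"
  proof (cases "i + 1 < n")
    case True
    then have "(i < length A) \<noteq> (i + 1 < length A)"
      using differ colour i by simp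
    then have "i = length A - 1"
      by auto
    then have "L ! i = last A" "L ! ((i + 1) mod n) = hd R"
      using True \<open>A \<noteq> []\<close> \<open>R \<noteq> []\<close> L by (simp_all add: nth_append last_conv_nth hd_conv_nth)
    then show ?thesis
      using ei by simp
  next
    case False
    then have "i = n - 1"
      using i by auto
    then have "L ! i = last L" "(i + 1) mod n = 0"
      using i \<open>L \<noteq> []\<close> n_def by (simp_all add: last_conv_nth)
    then have "L ! i = last R" "L ! ((i + 1) mod n) = hd A"
      using \<open>A \<noteq> []\<close> \<open>R \<noteq> []\<close> L by (simp_all add: nth_append hd_conv_nth)
    then show ?thesis
      using ei by auto
  qed
qed

lemma rotate_to_boundary:
  assumes "c \<in> set xs" "c \<in> C" "d \<in> set xs" "d \<notin> C"
  obtains k where "hd (rotate k xs) \<in> C" "last (rotate k xs) \<notin> C"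
proof -
  obtain j where j: "j < length xs" "xs ! j = d"
    using assms(3) by (auto simp: in_set_conv_nth)
  define L0 where "L0 = rotate j xs"
  have "xs \<noteq> []"
    using j by auto
  then have "L0 \<noteq> []" "hd L0 \<notin> C"
    using j assms(4) by (simp_all add: L0_def hd_rotate_conv_nth)
  define N where "N = takeWhile (\<lambda>x. x \<notin> C) L0"
  define R where "R = dropWhile (\<lambda>x. x \<notin> C) L0"
  have "N \<noteq> []"
    using \<open>L0 \<noteq> []\<close> \<open>hd L0 \<notin> C\<close> by (cases L0) (auto simp: N_def)
  have "R \<noteq> []"
    using assms(1,2) by (auto simp: R_def L0_def)
  have "hd R \<in> C"
    using hd_dropWhile[of "\<lambda>x. x \<notin> C" L0] \<open>R \<noteq> []\<close> by (simp add: R_def)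
  have "last N \<notin> C"
    using last_in_set[OF \<open>N \<noteq> []\<close>] set_takeWhileD unfolding N_def by fastforce
  have "rotate (length N + j) xs = R @ N"
    using rotate_append[of N R] rotate_rotate[of "length N" j xs]
    by (simp add: L0_def N_def R_def)
  then have "hd (rotate (length N + j) xs) \<in> C" "last (rotate (length N + j) xs) \<notin> C"
    using \<open>hd R \<in> C\<close> \<open>last N \<notin> C\<close> \<open>R \<noteq> []\<close> \<open>N \<noteq> []\<close> by simp_all
  then show ?thesis
    by (rule that)
qed

lemma cycle_arc_decomposition:
  assumes "simple_cycle E cs" "c \<in> set cs" "c \<in> C" "d \<in> set cs" "d \<notin> C"
  obtains A R where "simple_cycle E (A @ R)" "cycle_edges (A @ R) = cycle_edges cs"
    "set (A @ R) = set cs" "A \<noteq> []" "R \<noteq> []" "set A \<subseteq> C" "hd R \<notin> C" "last R \<notin> C"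
proof -
  obtain k where k: "hd (rotate k cs) \<in> C" "last (rotate k cs) \<notin> C"
    using rotate_to_boundary assms(2-5) by metis
  define L where "L = rotate k cs"
  define A where "A = takeWhile (\<lambda>x. x \<in> C) L"
  define R where "R = dropWhile (\<lambda>x. x \<in> C) L"
  have LAR: "L = A @ R"
    by (simp add: A_def R_def)
  have "L \<noteq> []"
    using assms(2) by (auto simp: L_def)
  then have "A \<noteq> []" "R \<noteq> []"
    using k last_in_set[of L] by (cases L; auto simp: A_def R_def L_def)+
  moreover have "set A \<subseteq> C"
    unfolding A_def by (auto dest: set_takeWhileD)
  moreover have "hd R \<notin> C"
    using hd_dropWhile[of "\<lambda>x. x \<in> C" L] \<open>R \<noteq> []\<close> by (simp add: R_def)
  moreover have "last R \<notin> C"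
    using k LAR \<open>R \<noteq> []\<close> by (simp add: L_def)
  moreover have "simple_cycle E (A @ R)"
    using rotate_simple_cycle[OF assms(1), of k] LAR by (simp add: L_def)
  moreover have "cycle_edges (A @ R) = cycle_edges cs"
    using rotate_cycle_edges[of k cs] LAR by (simp add: L_def)
  moreover have "set (A @ R) = set cs"
    using LAR set_rotate unfolding L_def by metis
  ultimately show ?thesis
    using that by blast
qed

(* A cycle split into arcs A, R1, y, R2, where A and R1 are thickened into disjoint
   connected sets X and Z off the rest of the cycle, X touches y and Z touches R2:
   then X, {y}, Z and R2 are four pairwise adjacent branch sets. *)
lemma K4_from_crossing_bridges:
  assumes sym: "symp E"
    and cyc: "simple_cycle E (A @ R1 @ y # R2)" "set (A @ R1 @ y # R2) \<subseteq> V"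
    and ne: "A \<noteq> []" "R1 \<noteq> []" "R2 \<noteq> []"
    and X: "set A \<subseteq> X" "X \<subseteq> V" "induces_connected E X" "X \<inter> set (R1 @ y # R2) = {}"
      "\<exists>u\<in>X. E u y"
    and Z: "set R1 \<subseteq> Z" "Z \<subseteq> V" "induces_connected E Z" "Z \<inter> set (A @ y # R2) = {}"
      "\<exists>u\<in>Z. \<exists>v\<in>set R2. E u v"
    and XZ: "X \<inter> Z = {}"
  shows "has_K4_minor V E"
proof -
  have "successively E (A @ R1 @ [y] @ R2)" "E (last R2) (hd A)"
    using simple_cycle_closed_walk[OF cyc(1)] ne by auto
  then have walk_R2: "successively E R2" and "E (last A) (hd R1)" "E (last R1) y"
    "E y (hd R2)" "E (hd A) (last R2)"
    using ne sym by (auto simp: successively_append_iff successively_Cons dest: sympD)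
  have "distinct (A @ R1 @ y # R2)"
    using cyc(1) by (simp add: simple_cycle_def)
  show ?thesis
  proof (rule K4_minorI[OF sym, of X "{y}" Z "set R2"])
    show "\<forall>B\<in>{X, {y}, Z, set R2}. B \<noteq> {} \<and> B \<subseteq> V \<and> induces_connected E B"
      using X(1-3) Z(1-3) ne cyc(2) walk_set_connected[OF sym, of "[y]"]
        walk_set_connected[OF sym walk_R2]
      by auto
    show "X \<inter> {y} = {}" "X \<inter> Z = {}" "X \<inter> set R2 = {}"
      "{y} \<inter> Z = {}" "{y} \<inter> set R2 = {}" "Z \<inter> set R2 = {}"
      using X(4) Z(4) XZ \<open>distinct (A @ R1 @ y # R2)\<close> by auto
    have "hd A \<in> X" "last A \<in> X" "hd R1 \<in> Z" "last R1 \<in> Z" "hd R2 \<in> set R2" "last R2 \<in> set R2"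
      using X(1) Z(1) ne by auto
    then show "\<exists>a\<in>X. \<exists>b\<in>{y}. E a b" "\<exists>a\<in>X. \<exists>b\<in>Z. E a b" "\<exists>a\<in>X. \<exists>b\<in>set R2. E a b"
      "\<exists>a\<in>{y}. \<exists>b\<in>Z. E a b" "\<exists>a\<in>{y}. \<exists>b\<in>set R2. E a b" "\<exists>a\<in>Z. \<exists>b\<in>set R2. E a b"
      using X(5) Z(5) \<open>E (last A) (hd R1)\<close> \<open>E (hd A) (last R2)\<close> \<open>E (last R1) y\<close>
        \<open>E y (hd R2)\<close> sym by (auto dest: sympD)
  qed
qed

(* First growth step: if R re-enters C at x, growing A inside C yields a connected
   X \<subseteq> C off R that touches some vertex y of C on R; y splits R into two
   nonempty parts since R starts and ends outside C. *)
lemma arc_attaches_in_C: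
  assumes sym: "symp E" and C_conn: "induces_connected E C"
    and dist: "distinct (A @ R)" and walk_A: "successively E A"
    and A: "A \<noteq> []" "set A \<subseteq> C" and R: "hd R \<notin> C" "last R \<notin> C"
    and x: "x \<in> set R" "x \<in> C"
  obtains X y R1 R2 where "R = R1 @ y # R2" "R1 \<noteq> []" "R2 \<noteq> []" "y \<in> C"
    "set A \<subseteq> X" "X \<subseteq> C" "induces_connected E X" "X \<inter> set R = {}" "\<exists>u\<in>X. E u y"
proof -
  define S where "S = set (A @ R)"
  define X where "X = reach E (set A \<union> (C - S)) (hd A)"
  have "x \<notin> set A" "x \<in> S" "hd A \<in> C"
    using x dist A by (auto simp: S_def)
  note X_props = attachment_exists[OF sym C_conn walk_A A(1) \<open>hd A \<in> C\<close> x(2) \<open>x \<in> S\<close>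
      \<open>x \<notin> set A\<close>, folded X_def]
  obtain y where "y \<in> C" "y \<in> S" "y \<notin> set A" "\<exists>u\<in>X. E u y"
    using X_props(4) by auto
  then have "y \<in> set R"
    by (simp add: S_def)
  then obtain R1 R2 where "R = R1 @ y # R2"
    by (meson split_list)
  moreover have "R1 \<noteq> []" "R2 \<noteq> []"
    using R \<open>y \<in> C\<close> \<open>R = R1 @ y # R2\<close> by auto
  moreover have "X \<subseteq> C"
    using X_props(2) A(2) by blast
  moreover have "set A \<inter> set R = {}"
    using dist by simp
  then have "X \<inter> set R = {}"
    using X_props(2) unfolding S_def set_append by blast
  ultimately show ?thesis
    using that[of R1 y R2 X] X_props(1,3) \<open>y \<in> C\<close> \<open>\<exists>u\<in>X. E u y\<close> by simp
qed

(* The heart of the proof: if the arc R re-enters C, there is a K4 minor.  After the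
   first growth step, growing R1 inside V - C gives a connected Z touching R2. *)
lemma reentering_arc_gives_K4:
  assumes G: "simple_graph V E" and cen: "central V E C" and cyc: "simple_cycle E (A @ R)"
    and A: "A \<noteq> []" "set A \<subseteq> C" and R: "hd R \<notin> C" "last R \<notin> C"
    and x: "x \<in> set R" "x \<in> C"
  shows "has_K4_minor V E"
proof -
  have sym: "symp E"
    using G by (rule simple_graph_symp)
  have SV: "set (A @ R) \<subseteq> V"
    using simple_cycle_subset[OF G cyc] .
  have CV: "C \<subseteq> V" and C_conn: "induces_connected E C" and N_conn: "induces_connected E (V - C)"
    using cen by (auto simp: central_def)
  have dist: "distinct (A @ R)"
    using cyc by (simp add: simple_cycle_def)
  have walk: "successively E (A @ R)"
    using simple_cycle_closed_walk[OF cyc] by auto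
  then have walk_A: "successively E A"
    by (simp add: successively_append_iff)
  obtain X y R1 R2 where R_split: "R = R1 @ y # R2" and ne: "R1 \<noteq> []" "R2 \<noteq> []"
    and "y \<in> C" and X: "set A \<subseteq> X" "X \<subseteq> C" "induces_connected E X" "X \<inter> set R = {}"
      "\<exists>u\<in>X. E u y"
    by (rule arc_attaches_in_C[OF sym C_conn dist walk_A A R x])
  define S where "S = set (A @ R)"
  have dist': "distinct (A @ R1 @ y # R2)"
    using dist R_split by simp
  have S_split: "S = set A \<union> set R1 \<union> {y} \<union> set R2"
    using R_split by (auto simp: S_def)
  define Z where "Z = reach E (set R1 \<union> (V - C - S)) (hd R1)"
  have hd_R1: "hd R1 \<in> V - C" and last_R2: "last R2 \<in> V - C"
    using R R_split ne SV by auto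
  have "last R2 \<in> S" "last R2 \<notin> set R1"
    using dist' ne by (auto simp: S_split)
  have walk_R1: "successively E R1"
    using walk R_split by (simp add: successively_append_iff)
  note Z = attachment_exists[OF sym N_conn walk_R1 ne(1) hd_R1 last_R2 \<open>last R2 \<in> S\<close>
      \<open>last R2 \<notin> set R1\<close>, folded Z_def]
  show ?thesis
  proof (rule K4_from_crossing_bridges[OF sym, of A R1 y R2 V X Z])
    show "simple_cycle E (A @ R1 @ y # R2)" "set (A @ R1 @ y # R2) \<subseteq> V"
      using cyc SV R_split by simp_all
    show "X \<subseteq> V" "X \<inter> set (R1 @ y # R2) = {}"
      using X(2,4) CV R_split by auto
    show "Z \<subseteq> V"
      using Z(2) SV R_split by auto
    have "set R1 \<inter> set (A @ y # R2) = {}"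
      using dist' by auto
    then show "Z \<inter> set (A @ y # R2) = {}"
      using Z(2) unfolding S_split by auto
    have "X \<inter> set R1 = {}"
      using X(4) R_split by auto
    then show "X \<inter> Z = {}"
      using X(2) Z(2) by blast
    have "(V - C) \<inter> S - set R1 \<subseteq> set R2"
      using A(2) \<open>y \<in> C\<close> unfolding S_split by blast
    then show "\<exists>u\<in>Z. \<exists>v\<in>set R2. E u v"
      using Z(4) by blast
    show "A \<noteq> []" "R1 \<noteq> []" "R2 \<noteq> []"
      using A(1) ne by simp_all
    show "set A \<subseteq> X" "induces_connected E X" "\<exists>u\<in>X. E u y"
      using X(1,3,5) by simp_all
    show "set R1 \<subseteq> Z" "induces_connected E Z"
      using Z(1,3) by simp_all
  qed
qed

theorem lemma2p2:
  fixes V :: "'a set" and E :: "'a \<Rightarrow> 'a \<Rightarrow> bool" and C :: "'a set" and cs :: "'a list"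
  assumes "simple_graph V E"
    and "\<not> has_K4_minor V E"
    and "central V E C"
    and "simple_cycle E cs"
  shows "card (cycle_edges cs \<inter> cut_edges V E C) \<le> 2"
proof (cases "\<forall>x\<in>set cs. \<forall>y\<in>set cs. (x \<in> C) = (y \<in> C)")
  case True
  then show ?thesis
    using cycle_cut_empty by (metis card.empty zero_le)
next
  case False
  then obtain c d where "c \<in> set cs" "c \<in> C" "d \<in> set cs" "d \<notin> C"
    by blast
  then obtain A R where arcs: "simple_cycle E (A @ R)" "cycle_edges (A @ R) = cycle_edges cs"
    "A \<noteq> []" "R \<noteq> []" "set A \<subseteq> C" "hd R \<notin> C" "last R \<notin> C"
    using cycle_arc_decomposition[OF assms(4)] by metis
  have "set R \<inter> C = {}"
    using reentering_arc_gives_K4[OF assms(1,3) arcs(1,3,5-7)] assms(2) by blast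
  then have "cycle_edges cs \<inter> cut_edges V E C \<subseteq> {{last A, hd R}, {last R, hd A}}"
    using cycle_cut_two_arcs[OF refl arcs(5) _ arcs(3,4)] arcs(2) by simp
  then have "card (cycle_edges cs \<inter> cut_edges V E C) \<le> card {{last A, hd R}, {last R, hd A}}"
    by (rule card_mono[rotated]) simp
  also have "\<dots> \<le> 2"
    by (simp add: card_insert_if)
  finally show ?thesis .
qed

end
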